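(* Let $n$ be odd and let $A$ be a latin square on the symbol set $\{0,\dots,n-1\}$ which is idempotent (the entry in row $x$, column $x$ is $x$) and commutative (the entry in row $x$, column $y$ equals the entry in row $y$, column $x$). Let $X=\{0,\dots,n-1\}\times\{0,1,2\}$ and let $S_{3n}$ be the Steiner latin square on $X$ associated with the Steiner triple system $S^1\cup S^2$, where $$S^1=\{\{(x,i),(y,i),(z,i+1 \bmod 3)\} : (x,y,z)\in A,\ x\ne y,\ i\in\{0,1,2\}\},\qquad S^2=\{\{(x,0),(x,1),(x,2)\}: x\in\{0,\dots,n-1\}\}.$$ For a transversal $T$ of $A$ define $T'\subseteq X^3$ as follows: for each $(a,b,c)\in T$ with $a\ne b$, put $((a,0),(b,0),(c,1)),\ ((a,1),(b,1),(c,2)),\ ((a,2),(b,2),(c,0))$ into $T'$; for each $(a,a,a)\in T$, put $((a,0),(a,1),(a,2)),\ ((a,1),(a,2),(a,0)),\ ((a,2),(a,0),(a,1))$ into $T'$. Then $T'$ is a transversal of $S_{3n}$, the map $T\mapsto T'$ is injective, and pairwise disjoint transversals of $A$ are mapped to pairwise disjoint transversals of $S_{3n}$.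
   Context: A latin square of order $m$ on a symbol set $Y$ with $|Y|=m$ is identified with a set of ordered triples $(r,c,s)\in Y^3$ meaning symbol $s$ is in row $r$, column $c$, such that each row and each column contains each symbol exactly once. A transversal is a set of $m$ entries containing exactly one entry from each row and each column, with no symbol repeated. A Steiner triple system (STS) on a set $Y$ is a set of $3$-element subsets of $Y$ such that every $2$-element subset of $Y$ lies in exactly one of them; $S^1\cup S^2$ above is an STS on $X$ (Bose's construction). The Steiner latin square of an STS on $Y$ is the latin square consisting of the triples $(a,a,a)$ for all $a\in Y$ together with all six ordered triples $(x,y,z)$ obtained by ordering each triple $\{x,y,z\}$ of the STS. *)

theory Defs
  imports Main
begin

definition latin_square :: "'a set \<Rightarrow> ('a \<times> 'a \<times> 'a) set \<Rightarrow> bool" where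
  "latin_square Y L \<longleftrightarrow> finite Y \<and> L \<subseteq> Y \<times> Y \<times> Y \<and>
     (\<forall>r\<in>Y. \<forall>c\<in>Y. \<exists>!s. (r, c, s) \<in> L) \<and>
     (\<forall>r\<in>Y. \<forall>s\<in>Y. \<exists>!c. (r, c, s) \<in> L) \<and>
     (\<forall>c\<in>Y. \<forall>s\<in>Y. \<exists>!r. (r, c, s) \<in> L)"

definition transversal :: "'a set \<Rightarrow> ('a \<times> 'a \<times> 'a) set \<Rightarrow> ('a \<times> 'a \<times> 'a) set \<Rightarrow> bool" where
  "transversal Y L T \<longleftrightarrow> T \<subseteq> L \<and> finite T \<and> card T = card Y \<and>
     (\<forall>r\<in>Y. \<exists>!e. e \<in> T \<and> fst e = r) \<and>
     (\<forall>c\<in>Y. \<exists>!e. e \<in> T \<and> fst (snd e) = c) \<and>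
     inj_on (\<lambda>e. snd (snd e)) T"

definition steiner_triple_system :: "'a set \<Rightarrow> 'a set set \<Rightarrow> bool" where
  "steiner_triple_system Y S \<longleftrightarrow> (\<forall>B\<in>S. B \<subseteq> Y \<and> card B = 3) \<and>
     (\<forall>x\<in>Y. \<forall>y\<in>Y. x \<noteq> y \<longrightarrow> (\<exists>!B. B \<in> S \<and> {x, y} \<subseteq> B))"

definition steiner_latin_square :: "'a set \<Rightarrow> 'a set set \<Rightarrow> ('a \<times> 'a \<times> 'a) set" where
  "steiner_latin_square Y S =
     {(a, a, a) | a. a \<in> Y} \<union>
     {(x, y, z) | x y z. {x, y, z} \<in> S \<and> x \<noteq> y \<and> y \<noteq> z \<and> x \<noteq> z}"

definition bose_X :: "nat \<Rightarrow> (nat \<times> nat) set" where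
  "bose_X n = {0..<n} \<times> {0..<3}"

definition bose_S1 :: "(nat \<times> nat \<times> nat) set \<Rightarrow> (nat \<times> nat) set set" where
  "bose_S1 A = {{(x, i), (y, i), (z, (i + 1) mod 3)} | x y z i.
                 (x, y, z) \<in> A \<and> x \<noteq> y \<and> i \<in> {0..<3}}"

definition bose_S2 :: "nat \<Rightarrow> (nat \<times> nat) set set" where
  "bose_S2 n = {{(x, 0), (x, 1), (x, 2)} | x. x \<in> {0..<n}}"

definition bose_S :: "nat \<Rightarrow> (nat \<times> nat \<times> nat) set \<Rightarrow> (nat \<times> nat) set set" where
  "bose_S n A = bose_S1 A \<union> bose_S2 n"

definition S3n :: "nat \<Rightarrow> (nat \<times> nat \<times> nat) set \<Rightarrow> ((nat \<times> nat) \<times> (nat \<times> nat) \<times> (nat \<times> nat)) set" where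
  "S3n n A = steiner_latin_square (bose_X n) (bose_S n A)"

definition lift_transversal :: "(nat \<times> nat \<times> nat) set \<Rightarrow> ((nat \<times> nat) \<times> (nat \<times> nat) \<times> (nat \<times> nat)) set" where
  "lift_transversal T =
     {((a, 0), (b, 0), (c, 1)) | a b c. (a, b, c) \<in> T \<and> a \<noteq> b} \<union>
     {((a, 1), (b, 1), (c, 2)) | a b c. (a, b, c) \<in> T \<and> a \<noteq> b} \<union>
     {((a, 2), (b, 2), (c, 0)) | a b c. (a, b, c) \<in> T \<and> a \<noteq> b} \<union>
     {((a, 0), (a, 1), (a, 2)) | a. (a, a, a) \<in> T} \<union>
     {((a, 1), (a, 2), (a, 0)) | a. (a, a, a) \<in> T} \<union>
     {((a, 2), (a, 0), (a, 1)) | a. (a, a, a) \<in> T}"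

end

theory Submission
  imports Defs
begin

text \<open>An entry \<open>(a, b, c)\<close> of \<open>T\<close> together with a level \<open>i \<in> \<int>/3\<close> lifts to the entry of \<open>S3n\<close>
  with row \<open>(a, i)\<close>, column \<open>(b, i + \<delta>)\<close> and symbol \<open>(c, i + \<delta> + 1)\<close>, where \<open>\<delta> = [a = b]\<close>;
  \<open>T'\<close> is exactly the set of these lifts. Since \<open>T\<close> meets every row, column and symbol
  exactly once and each coordinate of the lift is a rotation of the level, every coordinate map
  \<open>T \<times> \<int>/3 \<rightarrow> X\<close> is a bijection, so \<open>T'\<close> is a transversal. The lift of a single entry is
  injective, so distinct (disjoint) transversals have distinct (disjoint) lifts.\<close>

lemma bij_betw_add_mod:
  fixes m k :: nat
  assumes "0 < m"
  shows "bij_betw (\<lambda>i. (i + k) mod m) {0..<m} {0..<m}"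
proof -
  obtain l where m: "m = Suc l" using assms gr0_implies_Suc by blast
  have "j + k + l * k = j + m * k" "j + l * k + k = j + m * k" for j
    by (simp_all add: m)
  then have full_turn: "(j + k + l * k) mod m = j mod m" "(j + l * k + k) mod m = j mod m" for j
    by (metis mod_mult_self2)+
  show ?thesis
  proof (rule bij_betw_byWitness[where f' = "\<lambda>j. (j + l * k) mod m"])
    show "\<forall>i\<in>{0..<m}. ((i + k) mod m + l * k) mod m = i"
      by (simp add: mod_add_left_eq full_turn)
    show "\<forall>j\<in>{0..<m}. ((j + l * k) mod m + k) mod m = j"
      by (simp add: mod_add_left_eq full_turn)
  qed (use assms in auto)
qed

lemma bij_betw_fibrewise:
  assumes g: "bij_betw g T Y" and h: "\<And>t. t \<in> T \<Longrightarrow> bij_betw (h t) I J"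
  shows "bij_betw (\<lambda>(t, i). (g t, h t i)) (T \<times> I) (Y \<times> J)"
proof (rule bij_betw_imageI)
  show "inj_on (\<lambda>(t, i). (g t, h t i)) (T \<times> I)"
  proof (rule inj_onI, clarify)
    fix t i t' i' assume "t \<in> T" "i \<in> I" "t' \<in> T" "i' \<in> I" "g t = g t'" "h t i = h t' i'"
    moreover from this have "t = t'" using g by (auto simp: bij_betw_def dest: inj_onD)
    ultimately show "t = t' \<and> i = i'" using h by (auto simp: bij_betw_def dest: inj_onD)
  qed
  show "(\<lambda>(t, i). (g t, h t i)) ` (T \<times> I) = Y \<times> J"
  proof
    show "(\<lambda>(t, i). (g t, h t i)) ` (T \<times> I) \<subseteq> Y \<times> J"
      using g h by (auto simp: bij_betw_def)
    show "Y \<times> J \<subseteq> (\<lambda>(t, i). (g t, h t i)) ` (T \<times> I)"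
    proof clarify
      fix y j assume "y \<in> Y" "j \<in> J"
      then obtain t where t: "t \<in> T" "g t = y" using g by (auto simp: bij_betw_def)
      then obtain i where "i \<in> I" "h t i = j" using h \<open>j \<in> J\<close> by (fastforce simp: bij_betw_def)
      with t show "(y, j) \<in> (\<lambda>(t, i). (g t, h t i)) ` (T \<times> I)" by force
    qed
  qed
qed

lemma bij_betw_iff_ex1:
  "bij_betw f T Y \<longleftrightarrow> f ` T \<subseteq> Y \<and> (\<forall>y\<in>Y. \<exists>!x. x \<in> T \<and> f x = y)"
proof
  assume bij: "bij_betw f T Y"
  have "\<exists>!x. x \<in> T \<and> f x = y" if "y \<in> Y" for y
  proof -
    obtain x where "x \<in> T" "f x = y" using bij \<open>y \<in> Y\<close> by (auto simp: bij_betw_def)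
    moreover have "x' = x" if "x' \<in> T" "f x' = y" for x'
      using bij that calculation by (auto simp: bij_betw_def dest: inj_onD)
    ultimately show ?thesis by blast
  qed
  then show "f ` T \<subseteq> Y \<and> (\<forall>y\<in>Y. \<exists>!x. x \<in> T \<and> f x = y)"
    using bij by (simp add: bij_betw_def)
next
  assume "f ` T \<subseteq> Y \<and> (\<forall>y\<in>Y. \<exists>!x. x \<in> T \<and> f x = y)"
  then have into: "f ` T \<subseteq> Y" and ex1: "\<And>y. y \<in> Y \<Longrightarrow> \<exists>!x. x \<in> T \<and> f x = y"
    by auto
  show "bij_betw f T Y"
  proof (rule bij_betw_imageI)
    show "inj_on f T"
    proof (rule inj_onI)
      fix x x' assume x: "x \<in> T" and x': "x' \<in> T" "f x = f x'"
      have "\<exists>!z. z \<in> T \<and> f z = f x" using into x by (intro ex1) auto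
      then obtain z where "\<forall>w. w \<in> T \<and> f w = f x \<longrightarrow> w = z" by (elim ex1E)
      then show "x = x'" using x x' by metis
    qed
    have "Y \<subseteq> f ` T"
    proof
      fix y assume "y \<in> Y"
      then obtain x where "x \<in> T" "f x = y" using ex1 by blast
      then show "y \<in> f ` T" by blast
    qed
    with into show "f ` T = Y" by (rule equalityI)
  qed
qed

lemma transversal_imp_bij_betw:
  assumes L: "latin_square Y L" and T: "transversal Y L T"
  shows "bij_betw fst T Y" "bij_betw (fst \<circ> snd) T Y" "bij_betw (snd \<circ> snd) T Y"
proof -
  have "L \<subseteq> Y \<times> Y \<times> Y" using L by (simp add: latin_square_def)
  then have TY: "T \<subseteq> Y \<times> Y \<times> Y" using T by (auto simp: transversal_def)
  have "inj_on (snd \<circ> snd) T" using T by (simp add: transversal_def comp_def)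
  moreover have "card ((snd \<circ> snd) ` T) = card Y"
    using T \<open>inj_on (snd \<circ> snd) T\<close> by (simp add: transversal_def card_image)
  moreover have "(snd \<circ> snd) ` T = Y"
  proof (rule card_subset_eq)
    show "finite Y" using L by (simp add: latin_square_def)
  qed (use TY calculation in auto)
  ultimately show "bij_betw (snd \<circ> snd) T Y" by (simp add: bij_betw_def)
  have "fst ` T \<subseteq> Y" "(fst \<circ> snd) ` T \<subseteq> Y" using TY by auto
  then show "bij_betw fst T Y" "bij_betw (fst \<circ> snd) T Y"
    using T by (simp_all add: transversal_def bij_betw_iff_ex1 comp_def)
qed

lemma transversal_if_bij_betw:
  assumes "finite Y" and "T \<subseteq> L"
    and rows: "bij_betw fst T Y" and cols: "bij_betw (fst \<circ> snd) T Y"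
    and syms: "bij_betw (snd \<circ> snd) T Y"
  shows "transversal Y L T"
proof -
  have "finite T" "card T = card Y"
    using assms(1) rows bij_betw_finite bij_betw_same_card by blast+
  moreover have "\<forall>r\<in>Y. \<exists>!e. e \<in> T \<and> fst e = r" "\<forall>c\<in>Y. \<exists>!e. e \<in> T \<and> (fst \<circ> snd) e = c"
    using rows cols by (simp_all add: bij_betw_iff_ex1)
  moreover have "inj_on (snd \<circ> snd) T" using syms bij_betw_imp_inj_on by blast
  ultimately show ?thesis using assms(2) by (simp add: transversal_def comp_def)
qed

lemma latin_square_diagonal_entry:
  assumes L: "latin_square Y L" and "\<forall>x\<in>Y. (x, x, x) \<in> L" and "(a, a, c) \<in> L"
  shows "c = a"
proof -
  have "L \<subseteq> Y \<times> Y \<times> Y" "\<forall>r\<in>Y. \<forall>c\<in>Y. \<exists>!s. (r, c, s) \<in> L"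
    using L by (simp_all add: latin_square_def)
  moreover have "a \<in> Y" using \<open>(a, a, c) \<in> L\<close> calculation(1) by blast
  ultimately show ?thesis using assms(2,3) by blast
qed

text \<open>The shift \<open>of_bool (a = b)\<close> makes the lifts of a diagonal entry \<open>(a, a, a)\<close> the three
  cyclic rotations of the \<open>S\<^sup>2\<close> triple \<open>(a, 0), (a, 1), (a, 2)\<close>.\<close>
definition lift_entry :: "(nat \<times> nat \<times> nat) \<times> nat \<Rightarrow> (nat \<times> nat) \<times> (nat \<times> nat) \<times> (nat \<times> nat)" where
  "lift_entry = (\<lambda>((a, b, c), i).
     ((a, i), (b, (i + of_bool (a = b)) mod 3), (c, (i + of_bool (a = b) + 1) mod 3)))"

lemma lift_entry_apply:
  "lift_entry ((a, b, c), i) =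
     ((a, i), (b, (i + of_bool (a = b)) mod 3), (c, (i + of_bool (a = b) + 1) mod 3))"
  unfolding lift_entry_def by simp

lemma inj_lift_entry: "inj lift_entry"
  by (auto simp: inj_def lift_entry_apply)

lemma lift_transversal_eq_image:
  assumes "\<And>a c. (a, a, c) \<in> T \<Longrightarrow> c = a"
  shows "lift_transversal T = lift_entry ` (T \<times> {0..<3})"
proof
  have off_diagonal: "((a, i), (b, i), (c, (i + 1) mod 3)) \<in> lift_entry ` (T \<times> {0..<3})"
    if "(a, b, c) \<in> T" "a \<noteq> b" "i < 3" for a b c i
    using that by (intro rev_image_eqI[of "((a, b, c), i)"]) (auto simp: lift_entry_apply)
  have diagonal: "((a, i), (a, (i + 1) mod 3), (a, (i + 2) mod 3)) \<in> lift_entry ` (T \<times> {0..<3})"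
    if "(a, a, a) \<in> T" "i < 3" for a i
    using that by (intro rev_image_eqI[of "((a, a, a), i)"]) (auto simp: lift_entry_apply)
  show "lift_transversal T \<subseteq> lift_entry ` (T \<times> {0..<3})"
    unfolding lift_transversal_def
    using off_diagonal[where i = 0] off_diagonal[where i = 1] off_diagonal[where i = 2]
      diagonal[where i = 0] diagonal[where i = 1] diagonal[where i = 2]
    by (auto simp: numeral_2_eq_2)
  have "lift_entry ((a, b, c), i) \<in> lift_transversal T" if abc: "(a, b, c) \<in> T" and "i < 3"
    for a b c i
  proof -
    have levels: "i = 0 \<or> i = 1 \<or> i = 2" using \<open>i < 3\<close> by auto
    show ?thesis
    proof (cases "a = b")
      case True
      with abc assms have "c = a" by blast
      with True abc levels show ?thesis
        by (elim disjE) (simp_all add: lift_entry_apply lift_transversal_def)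
    next
      case False
      with abc levels show ?thesis
        by (elim disjE) (simp_all add: lift_entry_apply lift_transversal_def)
    qed
  qed
  then show "lift_entry ` (T \<times> {0..<3}) \<subseteq> lift_transversal T" by (intro image_subsetI) auto
qed

lemma steiner_latin_square_memI:
  "{x, y, z} \<in> S \<Longrightarrow> x \<noteq> y \<Longrightarrow> y \<noteq> z \<Longrightarrow> x \<noteq> z \<Longrightarrow> (x, y, z) \<in> steiner_latin_square Y S"
  unfolding steiner_latin_square_def by blast

lemma lift_entry_mem_S3n:
  assumes "(a, b, c) \<in> A" and "a < n" and "a = b \<Longrightarrow> c = a" and "i < 3"
  shows "lift_entry ((a, b, c), i) \<in> S3n n A"
proof (cases "a = b")
  case True
  have levels: "i = 0 \<or> i = 1 \<or> i = 2" using \<open>i < 3\<close> by auto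
  have "{(a, 0), (a, 1), (a, 2)} \<in> bose_S2 n" using \<open>a < n\<close> by (auto simp: bose_S2_def)
  moreover have "{(a, i), (a, (i + 1) mod 3), (a, (i + 2) mod 3)} = {(a, 0), (a, 1), (a, 2)}"
    using levels by (elim disjE) auto
  ultimately have block: "{(a, i), (a, (i + 1) mod 3), (a, (i + 2) mod 3)} \<in> bose_S n A"
    by (simp add: bose_S_def)
  have "(a, i) \<noteq> (a, (i + 1) mod 3)" "(a, (i + 1) mod 3) \<noteq> (a, (i + 2) mod 3)"
    "(a, i) \<noteq> (a, (i + 2) mod 3)"
    using levels by auto
  then have "((a, i), (a, (i + 1) mod 3), (a, (i + 2) mod 3)) \<in> S3n n A"
    unfolding S3n_def by (rule steiner_latin_square_memI[OF block])
  moreover have "lift_entry ((a, b, c), i) = ((a, i), (a, (i + 1) mod 3), (a, (i + 2) mod 3))"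
    using True assms(3) by (simp add: lift_entry_apply)
  ultimately show ?thesis by simp
next
  case False
  have "{(a, i), (b, i), (c, (i + 1) mod 3)} \<in> bose_S1 A"
    using assms(1) False \<open>i < 3\<close> unfolding bose_S1_def atLeastLessThan_iff by blast
  then have block: "{(a, i), (b, i), (c, (i + 1) mod 3)} \<in> bose_S n A"
    by (simp add: bose_S_def)
  have "(i + 1) mod 3 \<noteq> i" using assms(4) by (simp add: mod_Suc)
  then have "(a, i) \<noteq> (b, i)" "(b, i) \<noteq> (c, (i + 1) mod 3)" "(a, i) \<noteq> (c, (i + 1) mod 3)"
    using False by auto
  then have "((a, i), (b, i), (c, (i + 1) mod 3)) \<in> S3n n A"
    unfolding S3n_def by (rule steiner_latin_square_memI[OF block])
  moreover have "lift_entry ((a, b, c), i) = ((a, i), (b, i), (c, (i + 1) mod 3))"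
    using False assms(4) by (simp add: lift_entry_apply)
  ultimately show ?thesis by simp
qed

lemma lift_transversal_eq_image_if_transversal:
  assumes L: "latin_square {0..<n} A" and idem: "\<forall>x\<in>{0..<n}. (x, x, x) \<in> A"
    and T: "transversal {0..<n} A T"
  shows "lift_transversal T = lift_entry ` (T \<times> {0..<3})"
proof (rule lift_transversal_eq_image)
  fix a c assume "(a, a, c) \<in> T"
  then show "c = a" using latin_square_diagonal_entry[OF L idem] T by (auto simp: transversal_def)
qed

lemma lift_transversal_subset_S3n:
  assumes L: "latin_square {0..<n} A" and idem: "\<forall>x\<in>{0..<n}. (x, x, x) \<in> A"
    and T: "transversal {0..<n} A T"
  shows "lift_transversal T \<subseteq> S3n n A"
proof -
  have TA: "T \<subseteq> A" using T by (simp add: transversal_def)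
  have A_range: "A \<subseteq> {0..<n} \<times> {0..<n} \<times> {0..<n}" using L by (simp add: latin_square_def)
  have "lift_entry ((a, b, c), i) \<in> S3n n A" if "(a, b, c) \<in> T" "i < 3" for a b c i
  proof (rule lift_entry_mem_S3n)
    show "(a, b, c) \<in> A" using that TA by blast
    then show "a < n" using A_range by auto
    show "a = b \<Longrightarrow> c = a" using latin_square_diagonal_entry[OF L idem] \<open>(a, b, c) \<in> A\<close> by blast
  qed (use that in simp)
  then show ?thesis unfolding lift_transversal_eq_image_if_transversal[OF L idem T] by (intro image_subsetI) auto
qed

lemma transversal_lift_transversal:
  assumes L: "latin_square {0..<n} A" and idem: "\<forall>x\<in>{0..<n}. (x, x, x) \<in> A"
    and T: "transversal {0..<n} A T"
  shows "transversal (bose_X n) (S3n n A) (lift_transversal T)"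
proof (rule transversal_if_bij_betw)
  have lift_bij: "bij_betw lift_entry (T \<times> {0..<3}) (lift_transversal T)"
    unfolding lift_transversal_eq_image_if_transversal[OF L idem T]
    by (rule inj_on_imp_bij_betw[OF inj_on_subset[OF inj_lift_entry]]) simp
  have rotate: "bij_betw (\<lambda>i. (i + k) mod 3) {0..<3} {0..<3}" for k :: nat
    by (rule bij_betw_add_mod) simp
  define shift :: "nat \<times> nat \<times> nat \<Rightarrow> nat" where "shift t = of_bool (fst t = fst (snd t))" for t
  have coords: "fst \<circ> lift_entry = (\<lambda>(t, i). (fst t, id i))"
    "(fst \<circ> snd) \<circ> lift_entry = (\<lambda>(t, i). ((fst \<circ> snd) t, (i + shift t) mod 3))"
    "(snd \<circ> snd) \<circ> lift_entry = (\<lambda>(t, i). ((snd \<circ> snd) t, (i + (shift t + 1)) mod 3))"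
    by (auto simp: fun_eq_iff lift_entry_apply shift_def add.assoc)
  have "bij_betw (fst \<circ> lift_entry) (T \<times> {0..<3}) (bose_X n)"
    unfolding coords bose_X_def
    by (rule bij_betw_fibrewise[OF transversal_imp_bij_betw(1)[OF L T] bij_betw_id])
  then show "bij_betw fst (lift_transversal T) (bose_X n)"
    by (simp only: bij_betw_comp_iff[OF lift_bij])
  have "bij_betw ((fst \<circ> snd) \<circ> lift_entry) (T \<times> {0..<3}) (bose_X n)"
    unfolding coords bose_X_def
    by (rule bij_betw_fibrewise[where h = "\<lambda>t i. (i + shift t) mod 3",
          OF transversal_imp_bij_betw(2)[OF L T] rotate])
  then show "bij_betw (fst \<circ> snd) (lift_transversal T) (bose_X n)"
    by (simp only: bij_betw_comp_iff[OF lift_bij])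
  have "bij_betw ((snd \<circ> snd) \<circ> lift_entry) (T \<times> {0..<3}) (bose_X n)"
    unfolding coords bose_X_def
    by (rule bij_betw_fibrewise[where h = "\<lambda>t i. (i + (shift t + 1)) mod 3",
          OF transversal_imp_bij_betw(3)[OF L T] rotate])
  then show "bij_betw (snd \<circ> snd) (lift_transversal T) (bose_X n)"
    by (simp only: bij_betw_comp_iff[OF lift_bij])
  show "lift_transversal T \<subseteq> S3n n A" by (rule lift_transversal_subset_S3n[OF L idem T])
  show "finite (bose_X n)" by (simp add: bose_X_def)
qed

theorem mainTheorem3:
  fixes n :: nat and A :: "(nat \<times> nat \<times> nat) set"
  assumes "odd n"
    and "latin_square {0..<n} A"
    and idem: "\<forall>x\<in>{0..<n}. (x, x, x) \<in> A"
    and comm: "\<forall>x y z. (x, y, z) \<in> A \<longrightarrow> (y, x, z) \<in> A"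
  shows "(\<forall>T. transversal {0..<n} A T \<longrightarrow>
            transversal (bose_X n) (S3n n A) (lift_transversal T))
       \<and> inj_on lift_transversal {T. transversal {0..<n} A T}
       \<and> (\<forall>T1 T2. transversal {0..<n} A T1 \<longrightarrow> transversal {0..<n} A T2 \<longrightarrow>
            T1 \<inter> T2 = {} \<longrightarrow> lift_transversal T1 \<inter> lift_transversal T2 = {})"
  \<comment> \<open>Oddness and commutativity only make \<open>bose_S n A\<close> a Steiner triple system; the claims
    concern the triple set \<open>S3n n A\<close> itself and do not need them.\<close>
proof (intro conjI allI impI)
  note image = lift_transversal_eq_image_if_transversal[OF assms(2) idem]
  show "transversal (bose_X n) (S3n n A) (lift_transversal T)" if "transversal {0..<n} A T" for T
    using transversal_lift_transversal[OF assms(2) idem that] .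
  show "inj_on lift_transversal {T. transversal {0..<n} A T}"
  proof (rule inj_onI)
    fix T1 T2 assume "T1 \<in> {T. transversal {0..<n} A T}" "T2 \<in> {T. transversal {0..<n} A T}"
      and "lift_transversal T1 = lift_transversal T2"
    then have "T1 \<times> {0..<3::nat} = T2 \<times> {0..<3}"
      by (simp add: image inj_image_eq_iff[OF inj_lift_entry])
    then show "T1 = T2" by (auto simp: times_eq_iff)
  qed
  fix T1 T2 assume "transversal {0..<n} A T1" "transversal {0..<n} A T2" "T1 \<inter> T2 = {}"
  then show "lift_transversal T1 \<inter> lift_transversal T2 = {}"
    by (simp add: image image_Int[OF inj_lift_entry, symmetric] Times_Int_distrib1[symmetric])
qed

end
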